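(* Let $\mathcal H_1,\mathcal H_2$ be finite-dimensional Hilbert spaces and let $\psi\in\mathcal H_1\otimes\mathcal H_2$ be a unit vector with Schmidt representation $\psi=\sum_i\sqrt{p_i}\,\phi_i\otimes\chi_i$, where $\{\phi_i\}$ and $\{\chi_i\}$ are orthonormal bases of $\mathcal H_1$ and $\mathcal H_2$ respectively, $p_i\ge 0$ and $\sum_i p_i=1$. Let $P_\psi=|\psi\rangle\langle\psi|$ be the orthogonal projection onto $\mathbb C\psi$. Then $$\|P_\psi\|_\gamma=\sum_{i,j}\sqrt{p_ip_j}=\Big(\sum_i\sqrt{p_i}\Big)^2 .$$
   Context: For a finite-dimensional Hilbert space $\mathcal H$, $\mathcal T(\mathcal H)$ denotes the trace class operators on $\mathcal H$ (here all linear operators) and $\|x\|_1=\mathrm{Tr}\sqrt{x^\dagger x}$ the trace norm. For $t$ an operator on $\mathcal H_1\otimes\mathcal H_2$ (finite-dimensional), the greatest cross norm is $$\|t\|_\gamma:=\inf\Big\{\sum_{i=1}^n\|u_i\|_1\|v_i\|_1\ :\ t=\sum_{i=1}^n u_i\otimes v_i,\ u_i\in\mathcal T(\mathcal H_1),\ v_i\in\mathcal T(\mathcal H_2),\ n\in\mathbb N\Big\},$$ the infimum over all finite decompositions of $t$ into elementary tensors. *)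

theory Defs
  imports Complex_Main
begin

text \<open>Finite-dimensional Hilbert spaces are modelled concretely as coordinate spaces
  \<open>'a \<Rightarrow> complex\<close> over a finite index type \<open>'a\<close> (standard inner product);
  operators are matrices \<open>'a \<Rightarrow> 'a \<Rightarrow> complex\<close>.  The tensor product
  \<open>H1 \<otimes> H2\<close> is the coordinate space over \<open>'a \<times> 'b\<close>.\<close>

type_synonym 'a vec = "'a \<Rightarrow> complex"
type_synonym 'a op = "'a \<Rightarrow> 'a \<Rightarrow> complex"

definition cinner :: "('a::finite) vec \<Rightarrow> 'a vec \<Rightarrow> complex" where
  "cinner v w = (\<Sum>k\<in>UNIV. cnj (v k) * w k)"

definition orthonormal_basis :: "('i \<Rightarrow> ('a::finite) vec) \<Rightarrow> bool" where
  "orthonormal_basis e \<longleftrightarrow>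
     (\<forall>i j. cinner (e i) (e j) = (if i = j then 1 else 0)) \<and>
     (\<forall>v::'a vec. \<exists>c::'i \<Rightarrow> complex. \<exists>F. finite F \<and> v = (\<lambda>k. \<Sum>i\<in>F. c i * e i k))"

definition mmult :: "('a::finite) op \<Rightarrow> 'a op \<Rightarrow> 'a op" where
  "mmult x y = (\<lambda>i j. \<Sum>k\<in>UNIV. x i k * y k j)"

definition adjoint :: "'a op \<Rightarrow> 'a op" where
  "adjoint x = (\<lambda>i j. cnj (x j i))"

definition trace :: "('a::finite) op \<Rightarrow> complex" where
  "trace x = (\<Sum>i\<in>UNIV. x i i)"

definition psd :: "('a::finite) op \<Rightarrow> bool" where
  "psd s \<longleftrightarrow> adjoint s = s \<and>
     (\<forall>v. (\<Sum>i\<in>UNIV. \<Sum>j\<in>UNIV. cnj (v i) * s i j * v j) \<in> \<real> \<and>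
          0 \<le> Re (\<Sum>i\<in>UNIV. \<Sum>j\<in>UNIV. cnj (v i) * s i j * v j))"

definition trace_norm :: "('a::finite) op \<Rightarrow> real" where
  "trace_norm x = Re (trace (THE s. psd s \<and> mmult s s = mmult (adjoint x) x))"

definition tensor_op :: "'a op \<Rightarrow> 'b op \<Rightarrow> ('a \<times> 'b) op" where
  "tensor_op u v = (\<lambda>(i, j) (k, l). u i k * v j l)"

definition tensor_vec :: "'a vec \<Rightarrow> 'b vec \<Rightarrow> ('a \<times> 'b) vec" where
  "tensor_vec x y = (\<lambda>(i, j). x i * y j)"

definition gamma_norm :: "(('a::finite) \<times> ('b::finite)) op \<Rightarrow> real" where
  "gamma_norm t = Inf {r. \<exists>(n::nat) (u::nat \<Rightarrow> 'a op) (v::nat \<Rightarrow> 'b op).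
       t = (\<lambda>x y. \<Sum>i<n. tensor_op (u i) (v i) x y) \<and>
       r = (\<Sum>i<n. trace_norm (u i) * trace_norm (v i))}"

definition proj :: "'a vec \<Rightarrow> 'a op" where
  "proj psi = (\<lambda>x y. psi x * cnj (psi y))"

end

theory Submission
  imports "HOL-Analysis.Analysis" Defs
begin

text \<open>Write \<open>\<Omega> = \<Sum>\<^sub>i \<phi>\<^sub>i \<otimes> \<chi>\<^sub>i\<close>. The upper bound comes from the
  decomposition \<open>P\<^sub>\<psi> = \<Sum>\<^sub>i\<^sub>,\<^sub>j \<surd>(p\<^sub>i p\<^sub>j) |\<phi>\<^sub>i\<rangle>\<langle>\<phi>\<^sub>j| \<otimes> |\<chi>\<^sub>i\<rangle>\<langle>\<chi>\<^sub>j|\<close>, since a rank-one operator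
  \<open>|a\<rangle>\<langle>b|\<close> has trace norm \<open>\<parallel>a\<parallel> \<parallel>b\<parallel>\<close>. For the lower bound, the functional
  \<open>L(t) = \<langle>\<Omega>, t \<Omega>\<rangle>\<close> takes the value \<open>|\<langle>\<Omega>, \<psi>\<rangle>|\<^sup>2 = (\<Sum>\<^sub>i \<surd>p\<^sub>i)\<^sup>2\<close> on \<open>P\<^sub>\<psi>\<close> and satisfies
  \<open>|L(u \<otimes> v)| \<le> \<parallel>u\<parallel>\<^sub>1 \<parallel>v\<parallel>\<^sub>1\<close>: writing \<open>u = \<Sum>\<^sub>l |a\<^sub>l\<rangle>\<langle>b\<^sub>l|\<close> with \<open>\<Sum>\<^sub>l \<parallel>a\<^sub>l\<parallel> \<parallel>b\<^sub>l\<parallel> = \<parallel>u\<parallel>\<^sub>1\<close>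
  (from the spectral decomposition of \<open>u\<^sup>\<dagger>u\<close>) and similarly for \<open>v\<close>, it suffices that
  \<open>|\<langle>\<Omega>, a \<otimes> c\<rangle>| = |\<Sum>\<^sub>i \<langle>\<phi>\<^sub>i, a\<rangle> \<langle>\<chi>\<^sub>i, c\<rangle>| \<le> \<parallel>a\<parallel> \<parallel>c\<parallel>\<close>, which is Cauchy-Schwarz and Parseval.
  Since the trace norm is defined through the positive square root, computing it requires
  the spectral theorem for Hermitian matrices (proved variationally) and uniqueness of
  positive square roots.\<close>

definition outer :: "'a vec \<Rightarrow> 'a vec \<Rightarrow> 'a op" where
  "outer a b = (\<lambda>x y. a x * cnj (b y))"

definition mvmult :: "('a::finite) op \<Rightarrow> 'a vec \<Rightarrow> 'a vec" where
  "mvmult M v = (\<lambda>i. \<Sum>j\<in>UNIV. M i j * v j)"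

definition vnorm :: "('a::finite) vec \<Rightarrow> real" where
  "vnorm v = sqrt (Re (cinner v v))"

lemma cinner_commute: "cinner w v = cnj (cinner v w)"
  unfolding cinner_def by (simp add: mult.commute)

lemma cinner_add_right: "cinner v (\<lambda>k. w k + x k) = cinner v w + cinner v x"
  unfolding cinner_def by (simp add: distrib_left sum.distrib)
lemma cinner_diff_right: "cinner v (\<lambda>k. w k - x k) = cinner v w - cinner v x"
  unfolding cinner_def by (simp add: right_diff_distrib sum_subtractf)
lemma cinner_scale_right: "cinner v (\<lambda>k. c * w k) = c * cinner v w"
  unfolding cinner_def by (simp add: sum_distrib_left algebra_simps)
lemma cinner_sum_right: "cinner v (\<lambda>k. \<Sum>i\<in>A. f i k) = (\<Sum>i\<in>A. cinner v (f i))"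
  unfolding cinner_def by (simp add: sum_distrib_left) (rule sum.swap)
lemma cinner_add_left: "cinner (\<lambda>k. w k + x k) v = cinner w v + cinner x v"
  unfolding cinner_def by (simp add: distrib_right sum.distrib)
lemma cinner_diff_left: "cinner (\<lambda>k. w k - x k) v = cinner w v - cinner x v"
  unfolding cinner_def by (simp add: left_diff_distrib sum_subtractf)
lemma cinner_scale_left: "cinner (\<lambda>k. c * w k) v = cnj c * cinner w v"
  unfolding cinner_def by (simp add: sum_distrib_left algebra_simps)
lemma cinner_sum_left: "cinner (\<lambda>k. \<Sum>i\<in>A. f i k) v = (\<Sum>i\<in>A. cinner (f i) v)"
  unfolding cinner_def by (simp add: sum_distrib_right cnj_sum) (rule sum.swap)
lemma cinner_zero_right [simp]: "cinner v (\<lambda>k. 0) = 0"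
  unfolding cinner_def by simp

lemma cnj_mult_self: "cnj z * z = complex_of_real ((cmod z)\<^sup>2)"
  by (metis complex_norm_square mult.commute of_real_power)

lemma cinner_self: "cinner v v = complex_of_real (\<Sum>k\<in>UNIV. (cmod (v k))\<^sup>2)"
  unfolding cinner_def by (simp add: cnj_mult_self)

lemma Re_cinner_self: "Re (cinner v v) = (\<Sum>k\<in>UNIV. (cmod (v k))\<^sup>2)"
  by (simp add: cinner_self)

lemma Re_cinner_self_nonneg: "0 \<le> Re (cinner v v)"
  by (simp add: Re_cinner_self sum_nonneg)

lemma cinner_self_real: "cinner v v = complex_of_real (Re (cinner v v))"
  by (simp add: cinner_self)

lemma Re_cinner_self_eq_0_iff: "Re (cinner v v) = 0 \<longleftrightarrow> v = (\<lambda>k. 0)"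
  by (auto simp: Re_cinner_self sum_nonneg_eq_0_iff fun_eq_iff)

lemma cinner_self_eq_0_iff: "cinner v v = 0 \<longleftrightarrow> v = (\<lambda>k. 0)"
  by (metis Re_cinner_self_eq_0_iff cinner_self_real zero_complex.simps(1) of_real_0)

lemma vnorm_eq_L2_set: "vnorm v = L2_set (\<lambda>k. cmod (v k)) UNIV"
  unfolding vnorm_def L2_set_def Re_cinner_self ..

lemma vnorm_nonneg: "0 \<le> vnorm v"
  by (simp add: vnorm_def Re_cinner_self_nonneg)

lemma vnorm_pos: "v \<noteq> (\<lambda>k. 0) \<Longrightarrow> 0 < vnorm v"
  using vnorm_nonneg[of v] Re_cinner_self_eq_0_iff[of v] unfolding vnorm_def by auto

lemma power2_vnorm: "(vnorm v)\<^sup>2 = Re (cinner v v)"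
  by (simp add: vnorm_def Re_cinner_self_nonneg)

lemma vnorm_scale: "vnorm (\<lambda>k. complex_of_real c * v k) = \<bar>c\<bar> * vnorm v"
  unfolding vnorm_def
  by (simp add: cinner_scale_left cinner_scale_right power2_eq_square real_sqrt_mult)

lemma cinner_self_eq_power2_vnorm: "cinner v v = complex_of_real ((vnorm v)\<^sup>2)"
  unfolding power2_vnorm by (rule cinner_self_real)

lemma cinner_self_eq_1_iff: "cinner v v = 1 \<longleftrightarrow> vnorm v = 1"
  unfolding vnorm_def by (subst cinner_self_real) (auto simp: complex_eq_iff)

lemma vnorm_normalize:
  assumes "y \<noteq> (\<lambda>a. 0)"
  shows "vnorm (\<lambda>a. complex_of_real (1 / vnorm y) * y a) = 1"
  unfolding vnorm_scale using vnorm_pos[OF assms] by simp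

lemma mvmult_adjoint: "cinner w (mvmult M v) = cinner (mvmult (adjoint M) w) v"
  unfolding cinner_def mvmult_def adjoint_def
  by (simp add: sum_distrib_left sum_distrib_right cnj_sum algebra_simps) (rule sum.swap)

lemma hermitian_cinner_mvmult: "adjoint M = M \<Longrightarrow> cinner w (mvmult M v) = cinner (mvmult M w) v"
  by (simp add: mvmult_adjoint)

lemma mvmult_add: "mvmult M (\<lambda>k. v k + w k) = (\<lambda>k. mvmult M v k + mvmult M w k)"
  unfolding mvmult_def by (simp add: distrib_left sum.distrib)
lemma mvmult_diff: "mvmult M (\<lambda>k. v k - w k) = (\<lambda>k. mvmult M v k - mvmult M w k)"
  unfolding mvmult_def by (simp add: right_diff_distrib sum_subtractf)
lemma mvmult_scale: "mvmult M (\<lambda>k. c * v k) = (\<lambda>k. c * mvmult M v k)"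
  unfolding mvmult_def by (simp add: sum_distrib_left algebra_simps)
lemma mvmult_mmult: "mvmult (mmult A B) v = mvmult A (mvmult B v)"
  unfolding mvmult_def mmult_def
  by (simp add: sum_distrib_left sum_distrib_right algebra_simps) (rule ext, rule sum.swap)
lemma mvmult_sum_op: "mvmult (\<lambda>z z'. \<Sum>l\<in>A. X l z z') v = (\<lambda>z. \<Sum>l\<in>A. mvmult (X l) v z)"
  unfolding mvmult_def by (simp add: sum_distrib_right) (rule ext, rule sum.swap)

lemma mvmult_outer: "mvmult (outer x y) v = (\<lambda>k. cinner y v * x k)"
  unfolding mvmult_def outer_def cinner_def by (simp add: sum_distrib_left mult.commute mult.left_commute)

lemma hermitian_iff: "adjoint M = M \<longleftrightarrow> (\<forall>i j. cnj (M j i) = M i j)"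
  unfolding adjoint_def fun_eq_iff by (rule refl)

lemma adjoint_adjoint [simp]: "adjoint (adjoint u) = u"
  unfolding adjoint_def by simp

lemma hermitian_gram: "adjoint (mmult (adjoint u) u) = mmult (adjoint u) u"
  unfolding adjoint_def mmult_def by (simp add: mult.commute)

lemma psd_iff:
  "psd s \<longleftrightarrow> adjoint s = s \<and> (\<forall>v. cinner v (mvmult s v) \<in> \<real> \<and> 0 \<le> Re (cinner v (mvmult s v)))"
proof -
  have "\<And>v. cinner v (mvmult s v) = (\<Sum>i\<in>UNIV. \<Sum>j\<in>UNIV. cnj (v i) * s i j * v j)"
    unfolding cinner_def mvmult_def by (simp add: sum_distrib_left mult.assoc)
  then show ?thesis unfolding psd_def by simp
qed

lemma psd_hermitian: "psd s \<Longrightarrow> adjoint s = s"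
  by (simp add: psd_iff)

lemma psd_form_nonneg: "psd s \<Longrightarrow> 0 \<le> Re (cinner v (mvmult s v))"
  by (simp add: psd_iff)

lemma linear_coeff_eq_0_if_nonneg:
  fixes a b :: real
  assumes nonneg: "\<And>t. 0 \<le> a * t + b * t\<^sup>2"
  shows "a = 0"
proof (rule ccontr)
  assume a0: "a \<noteq> 0"
  define c where "c = \<bar>b\<bar> + 1"
  have c0: "c > 0" by (simp add: c_def)
  have "0 \<le> (a * (- a / c) + b * (- a / c)\<^sup>2) * c\<^sup>2" using nonneg[of "- a / c"] by simp
  also have "\<dots> = - (a\<^sup>2 * c) + b * a\<^sup>2"
    using c0 by (simp add: field_simps power2_eq_square)
  also have "\<dots> \<le> - (a\<^sup>2 * c) + \<bar>b\<bar> * a\<^sup>2"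
    by (simp add: mult_right_mono)
  also have "\<dots> = - (a\<^sup>2)" by (simp add: c_def algebra_simps)
  finally show False using a0 by simp
qed

lemma Re_form_add_scaled:
  fixes t :: real
  assumes "adjoint N = N"
  shows "Re (cinner (\<lambda>k. v k + complex_of_real t * w k) (mvmult N (\<lambda>k. v k + complex_of_real t * w k)))
     = Re (cinner v (mvmult N v)) + 2 * t * Re (cinner w (mvmult N v)) + t\<^sup>2 * Re (cinner w (mvmult N w))"
proof -
  have conj: "cinner v (mvmult N w) = cnj (cinner w (mvmult N v))"
    using hermitian_cinner_mvmult[OF assms, of v w] cinner_commute[of "mvmult N v" w] by simp
  have "cinner (\<lambda>k. v k + complex_of_real t * w k) (mvmult N (\<lambda>k. v k + complex_of_real t * w k))
    = cinner v (mvmult N v) + complex_of_real t * cinner v (mvmult N w)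
      + complex_of_real t * cinner w (mvmult N v)
      + complex_of_real t * complex_of_real t * cinner w (mvmult N w)"
    unfolding mvmult_add mvmult_scale cinner_add_left cinner_add_right cinner_scale_left
        cinner_scale_right by (simp add: distrib_left add.assoc mult.assoc)
  then show ?thesis by (simp add: conj power2_eq_square algebra_simps)
qed

lemma Re_form_scale:
  "Re (cinner (\<lambda>a. complex_of_real c * y a) (mvmult M (\<lambda>a. complex_of_real c * y a)))
     = c\<^sup>2 * Re (cinner y (mvmult M y))"
  by (simp add: mvmult_scale cinner_scale_left cinner_scale_right power2_eq_square)

text \<open>If a form that is nonnegative along the line \<open>v + t w\<close> vanishes at \<open>v\<close>, then \<open>v\<close> is a
  minimum there and the derivative \<open>2 Re \<langle>w, N v\<rangle>\<close> vanishes.\<close>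

lemma form_stationary_at_zero:
  assumes "adjoint N = N"
    and "\<And>t::real. 0 \<le> Re (cinner (\<lambda>k. v k + complex_of_real t * w k) (mvmult N (\<lambda>k. v k + complex_of_real t * w k)))"
    and "Re (cinner v (mvmult N v)) = 0"
  shows "Re (cinner w (mvmult N v)) = 0"
proof -
  have "\<And>t. 0 \<le> (2 * Re (cinner w (mvmult N v))) * t + Re (cinner w (mvmult N w)) * t\<^sup>2"
    using assms(2) unfolding Re_form_add_scaled[OF assms(1)] assms(3) by (simp add: algebra_simps)
  then show ?thesis using linear_coeff_eq_0_if_nonneg by fastforce
qed

lemma psd_form_eq_0_imp_kernel:
  assumes "psd s" and "Re (cinner v (mvmult s v)) = 0"
  shows "mvmult s v = (\<lambda>k. 0)"
proof -
  have "Re (cinner (mvmult s v) (mvmult s v)) = 0"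
    by (rule form_stationary_at_zero[OF psd_hermitian psd_form_nonneg assms(2)]) (use assms(1) in simp_all)
  then show ?thesis using Re_cinner_self_eq_0_iff by blast
qed

text \<open>Finite families are indexed by \<open>j < K\<close>, so that they can be built one vector at a time.\<close>

definition orthonormal_upto :: "nat \<Rightarrow> (nat \<Rightarrow> ('a::finite) vec) \<Rightarrow> bool" where
  "orthonormal_upto K w \<longleftrightarrow> (\<forall>j<K. \<forall>l<K. cinner (w j) (w l) = (if j = l then 1 else 0))"

definition complete_upto :: "nat \<Rightarrow> (nat \<Rightarrow> ('a::finite) vec) \<Rightarrow> bool" where
  "complete_upto K w \<longleftrightarrow> (\<forall>x. x = (\<lambda>a. \<Sum>j<K. cinner (w j) x * w j a))"

definition orth_compl :: "nat \<Rightarrow> (nat \<Rightarrow> ('a::finite) vec) \<Rightarrow> 'a vec set" where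
  "orth_compl K w = {y. \<forall>j<K. cinner (w j) y = 0}"

lemma orth_compl_lincomb:
  "y \<in> orth_compl K w \<Longrightarrow> z \<in> orth_compl K w \<Longrightarrow> (\<lambda>a. y a + c * z a) \<in> orth_compl K w"
  unfolding orth_compl_def by (simp add: cinner_add_right cinner_scale_right)

lemma orth_compl_diff:
  "y \<in> orth_compl K w \<Longrightarrow> z \<in> orth_compl K w \<Longrightarrow> (\<lambda>a. y a - z a) \<in> orth_compl K w"
  unfolding orth_compl_def by (simp add: cinner_diff_right)

lemma orth_compl_scale: "y \<in> orth_compl K w \<Longrightarrow> (\<lambda>a. c * y a) \<in> orth_compl K w"
  unfolding orth_compl_def by (simp add: cinner_scale_right)

lemma orthonormal_uptoD: "orthonormal_upto K w \<Longrightarrow> j < K \<Longrightarrow> l < K \<Longrightarrow>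
    cinner (w j) (w l) = (if j = l then 1 else 0)"
  unfolding orthonormal_upto_def by blast

lemma orthonormal_upto_Suc_upd:
  assumes "orthonormal_upto k w" "v \<in> orth_compl k w" "cinner v v = 1"
  shows "orthonormal_upto (Suc k) (w(k := v))"
proof -
  have "cinner v (w l) = cnj (cinner (w l) v)" for l by (rule cinner_commute)
  then show ?thesis
    using assms unfolding orthonormal_upto_def orth_compl_def by (auto simp: less_Suc_eq)
qed

lemma residual_in_orth_compl:
  assumes "orthonormal_upto K w"
  shows "(\<lambda>a. x a - (\<Sum>j<K. cinner (w j) x * w j a)) \<in> orth_compl K w"
proof -
  have "cinner (w l) (\<lambda>a. x a - (\<Sum>j<K. cinner (w j) x * w j a)) = 0" if "l < K" for l
  proof -
    have "(\<Sum>j<K. cinner (w j) x * cinner (w l) (w j)) = (\<Sum>j<K. if j = l then cinner (w j) x else 0)"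
      using assms that by (intro sum.cong) (auto simp: orthonormal_uptoD)
    then show ?thesis
      using that by (simp add: cinner_diff_right cinner_sum_right cinner_scale_right)
  qed
  then show ?thesis unfolding orth_compl_def by blast
qed

lemma bessel_inequality:
  assumes "orthonormal_upto K w"
  shows "(\<Sum>j<K. (cmod (cinner (w j) y))\<^sup>2) \<le> Re (cinner y y)"
proof -
  define c where "c j = cinner (w j) y" for j
  define r where "r = (\<lambda>a. y a - (\<Sum>j<K. c j * w j a))"
  have "r \<in> orth_compl K w" unfolding r_def c_def by (rule residual_in_orth_compl[OF assms])
  then have "cinner r (\<lambda>a. \<Sum>j<K. c j * w j a) = 0"
    unfolding orth_compl_def by (simp add: cinner_sum_right cinner_scale_right cinner_commute[of r])
  moreover have "cinner r r = cinner r y - cinner r (\<lambda>a. \<Sum>j<K. c j * w j a)"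
    by (simp only: r_def[symmetric] cinner_diff_right[symmetric])
  ultimately have "cinner r r = cinner r y" by simp
  also have "\<dots> = cinner y y - (\<Sum>j<K. cnj (c j) * c j)"
    unfolding r_def by (simp add: cinner_diff_left cinner_sum_left cinner_scale_left c_def)
  finally have "Re (cinner r r) = Re (cinner y y) - (\<Sum>j<K. (cmod (c j))\<^sup>2)"
    by (simp add: cnj_mult_self)
  then show ?thesis using Re_cinner_self_nonneg[of r] by (simp add: c_def)
qed

definition unit_vec :: "('a::finite) \<Rightarrow> 'a vec" where
  "unit_vec a = (\<lambda>b. if b = a then 1 else 0)"

lemma cinner_unit_vec: "cinner v (unit_vec a) = cnj (v a)"
  unfolding cinner_def unit_vec_def by (simp add: if_distrib sum.delta cong: if_cong)

text \<open>Summing Bessel's inequality over the standard basis vectors.\<close>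

lemma orthonormal_upto_le_card:
  assumes "orthonormal_upto K (w :: nat \<Rightarrow> ('a::finite) vec)"
  shows "K \<le> CARD('a)"
proof -
  have "real K = (\<Sum>j<K. Re (cinner (w j) (w j)))"
    using assms by (simp add: orthonormal_uptoD)
  also have "\<dots> = (\<Sum>a\<in>UNIV. \<Sum>j<K. (cmod (cinner (w j) (unit_vec a)))\<^sup>2)"
    by (simp add: Re_cinner_self cinner_unit_vec) (rule sum.swap)
  also have "\<dots> \<le> (\<Sum>a\<in>(UNIV::'a set). Re (cinner (unit_vec a) (unit_vec a)))"
    by (rule sum_mono) (rule bessel_inequality[OF assms])
  also have "\<dots> = (\<Sum>a\<in>(UNIV::'a set). 1)" by (simp only: cinner_unit_vec) (simp add: unit_vec_def)
  finally show ?thesis by simp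
qed

lemma complete_upto_expansion:
  assumes "complete_upto K w"
  shows "A i i' = (\<Sum>j<K. mvmult A (w j) i * cnj (w j i'))"
proof -
  have delta: "(\<Sum>j<K. w j k * cnj (w j i')) = (if k = i' then 1 else 0)" for k
  proof -
    have "unit_vec i' k = (\<Sum>j<K. cinner (w j) (unit_vec i') * w j k)"
      using assms unfolding complete_upto_def by metis
    then show ?thesis by (simp only: cinner_unit_vec) (simp add: unit_vec_def mult.commute)
  qed
  have "A i i' = (\<Sum>k\<in>UNIV. A i k * (\<Sum>j<K. w j k * cnj (w j i')))"
    by (simp only: delta) (simp add: if_distrib sum.delta cong: if_cong)
  also have "\<dots> = (\<Sum>j<K. mvmult A (w j) i * cnj (w j i'))"
    unfolding mvmult_def by (simp add: sum_distrib_left sum_distrib_right mult.assoc) (rule sum.swap)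
  finally show ?thesis .
qed

lemma complete_upto_op_eqI:
  assumes "complete_upto K w" and "\<And>j. j < K \<Longrightarrow> mvmult A (w j) = mvmult B (w j)"
  shows "A = B"
  using complete_upto_expansion[OF assms(1), of A] complete_upto_expansion[OF assms(1), of B] assms(2)
  by (auto simp: fun_eq_iff)

section \<open>The spectral theorem for Hermitian matrices\<close>

definition eigenvectors_upto :: "('a::finite) op \<Rightarrow> nat \<Rightarrow> (nat \<Rightarrow> 'a vec) \<Rightarrow> (nat \<Rightarrow> real) \<Rightarrow> bool" where
  "eigenvectors_upto M K w lam \<longleftrightarrow> (\<forall>j<K. mvmult M (w j) = (\<lambda>a. complex_of_real (lam j) * w j a))"

lemma orth_compl_invariant:
  assumes "adjoint M = M" "eigenvectors_upto M k w lam" "y \<in> orth_compl k w"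
  shows "mvmult M y \<in> orth_compl k w"
proof -
  have "cinner (w j) (mvmult M y) = complex_of_real (lam j) * cinner (w j) y" if "j < k" for j
    using hermitian_cinner_mvmult[OF assms(1)] assms(2) that
    unfolding eigenvectors_upto_def by (simp add: cinner_scale_left)
  then show ?thesis using assms(3) unfolding orth_compl_def by simp
qed

text \<open>The maximum of the quadratic form over the unit sphere of a subspace is attained; the
  subspace and the sphere are transported to \<open>complex^'a\<close> to use compactness there.\<close>

lemma form_attains_max_on_orth_compl_sphere:
  fixes M :: "('a::finite) op"
  assumes "v0 \<in> orth_compl k w" "vnorm v0 = 1"
  obtains v where "v \<in> orth_compl k w" "vnorm v = 1"
    "\<And>y. y \<in> orth_compl k w \<Longrightarrow> vnorm y = 1 \<Longrightarrow> Re (cinner y (mvmult M y)) \<le> Re (cinner v (mvmult M v))"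
proof -
  define S where "S = sphere (0::complex^'a) 1 \<inter> (\<Inter>j\<in>{..<k}. {x. cinner (w j) (vec_nth x) = 0})"
  have "compact S" unfolding S_def cinner_def
    by (intro compact_Int_closed compact_sphere closed_INT ballI closed_Collect_eq continuous_intros)
  have memS: "x \<in> S \<longleftrightarrow> vec_nth x \<in> orth_compl k w \<and> vnorm (vec_nth x) = 1" for x
    unfolding S_def orth_compl_def by (auto simp: norm_vec_def vnorm_eq_L2_set)
  have "vec_lambda v0 \<in> S" using assms unfolding memS by (simp add: vec_lambda_inverse)
  then have "S \<noteq> {}" by blast
  define f where "f x = Re (cinner (vec_nth x) (mvmult M (vec_nth x)))" for x :: "complex^'a"
  have "continuous_on S f" unfolding f_def cinner_def mvmult_def by (intro continuous_intros)
  then obtain xm where "xm \<in> S" and max: "\<forall>y\<in>S. f y \<le> f xm"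
    using continuous_attains_sup[OF \<open>compact S\<close> \<open>S \<noteq> {}\<close>] by blast
  show ?thesis
  proof (rule that)
    show "vec_nth xm \<in> orth_compl k w" "vnorm (vec_nth xm) = 1" using \<open>xm \<in> S\<close> memS by blast+
    fix y assume "y \<in> orth_compl k w" "vnorm y = 1"
    then have "vec_lambda y \<in> S" unfolding memS by (simp add: vec_lambda_inverse)
    then have "f (vec_lambda y) \<le> f xm" using max by blast
    then show "Re (cinner y (mvmult M y)) \<le> Re (cinner (vec_nth xm) (mvmult M (vec_nth xm)))"
      unfolding f_def by (simp add: vec_lambda_inverse)
  qed
qed

lemma form_le_by_homogeneity:
  assumes "\<And>y. y \<in> orth_compl k w \<Longrightarrow> vnorm y = 1 \<Longrightarrow> Re (cinner y (mvmult M y)) \<le> \<mu>"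
    and "y \<in> orth_compl k w"
  shows "Re (cinner y (mvmult M y)) \<le> \<mu> * Re (cinner y y)"
proof (cases "y = (\<lambda>a. 0)")
  case True
  then show ?thesis by (simp add: cinner_def mvmult_def)
next
  case False
  define n where "n = vnorm y"
  have "n > 0" unfolding n_def using vnorm_pos[OF False] .
  have "(1 / n)\<^sup>2 * Re (cinner y (mvmult M y)) \<le> \<mu>"
    using assms(1)[OF orth_compl_scale[OF assms(2)] vnorm_normalize[OF False]]
    unfolding Re_form_scale n_def .
  then have "Re (cinner y (mvmult M y)) \<le> \<mu> * n\<^sup>2" using \<open>n > 0\<close> by (simp add: field_simps)
  then show ?thesis unfolding n_def power2_vnorm .
qed

text \<open>At a maximiser \<open>v\<close> of the form on the unit sphere of an invariant subspace, the form of
  \<open>N = \<mu> I - M\<close> is nonnegative on the subspace and vanishes at \<open>v\<close>, so \<open>v\<close> is a stationary point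
  and \<open>N v\<close> is orthogonal to itself.\<close>

lemma max_form_eigenvector:
  fixes M :: "('a::finite) op"
  assumes herm: "adjoint M = M"
    and inv: "\<And>y. y \<in> orth_compl k w \<Longrightarrow> mvmult M y \<in> orth_compl k w"
    and v: "v \<in> orth_compl k w" "cinner v v = 1"
    and max: "\<And>y. y \<in> orth_compl k w \<Longrightarrow> Re (cinner y (mvmult M y)) \<le> \<mu> * Re (cinner y y)"
    and \<mu>: "\<mu> = Re (cinner v (mvmult M v))"
  shows "mvmult M v = (\<lambda>a. complex_of_real \<mu> * v a)"
proof -
  define N where "N = (\<lambda>i j. (if i = j then complex_of_real \<mu> else 0) - M i j)"
  have mvN: "mvmult N y = (\<lambda>a. complex_of_real \<mu> * y a - mvmult M y a)" for y
  proof -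
    have "mvmult N y a = (\<Sum>j\<in>UNIV. (if a = j then complex_of_real \<mu> * y j else 0) - M a j * y j)" for a
      unfolding mvmult_def N_def by (intro sum.cong) (auto simp: left_diff_distrib)
    then show ?thesis unfolding mvmult_def by (simp add: sum_subtractf fun_eq_iff)
  qed
  have hermN: "adjoint N = N"
    using herm unfolding hermitian_iff N_def by auto
  have formN: "Re (cinner y (mvmult N y)) = \<mu> * Re (cinner y y) - Re (cinner y (mvmult M y))" for y
    unfolding mvN by (simp add: cinner_diff_right cinner_scale_right)
  have "mvmult N v \<in> orth_compl k w"
    unfolding mvN by (rule orth_compl_diff[OF orth_compl_scale[OF v(1)] inv[OF v(1)]])
  then have "0 \<le> Re (cinner (\<lambda>a. v a + complex_of_real t * mvmult N v a)
                      (mvmult N (\<lambda>a. v a + complex_of_real t * mvmult N v a)))" for t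
    unfolding formN using max orth_compl_lincomb[OF v(1)] by simp
  moreover have "Re (cinner v (mvmult N v)) = 0" unfolding formN v(2) \<mu> by simp
  ultimately have "Re (cinner (mvmult N v) (mvmult N v)) = 0"
    by (rule form_stationary_at_zero[OF hermN])
  then have "mvmult N v = (\<lambda>a. 0)" using Re_cinner_self_eq_0_iff by blast
  then show ?thesis unfolding mvN by (simp add: fun_eq_iff)
qed

lemma hermitian_eigenvector_in_orth_compl:
  assumes herm: "adjoint M = M" and eig: "eigenvectors_upto M k w lam"
    and v0: "v0 \<in> orth_compl k w" "v0 \<noteq> (\<lambda>a. 0)"
  obtains v \<mu> where "v \<in> orth_compl k w" "cinner v v = 1" "mvmult M v = (\<lambda>a. complex_of_real \<mu> * v a)"
proof -
  obtain v where v: "v \<in> orth_compl k w" "vnorm v = 1"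
    and max: "\<And>y. y \<in> orth_compl k w \<Longrightarrow> vnorm y = 1 \<Longrightarrow>
                  Re (cinner y (mvmult M y)) \<le> Re (cinner v (mvmult M v))"
    using form_attains_max_on_orth_compl_sphere[OF orth_compl_scale[OF v0(1)] vnorm_normalize[OF v0(2)]]
    by blast
  have vv: "cinner v v = 1" using v(2) cinner_self_eq_1_iff by blast
  have "mvmult M v = (\<lambda>a. complex_of_real (Re (cinner v (mvmult M v))) * v a)"
    by (rule max_form_eigenvector[OF herm orth_compl_invariant[OF herm eig] v(1) vv
          form_le_by_homogeneity[OF max] refl])
  then show ?thesis by (rule that[OF v(1) vv])
qed

lemma extend_eigenvectors:
  assumes herm: "adjoint M = M" and orth: "orthonormal_upto k w"
    and eig: "eigenvectors_upto M k w lam" and incomplete: "\<not> complete_upto k w"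
  obtains w' lam' where "orthonormal_upto (Suc k) w'" "eigenvectors_upto M (Suc k) w' lam'"
proof -
  obtain x where x: "x \<noteq> (\<lambda>a. \<Sum>j<k. cinner (w j) x * w j a)"
    using incomplete unfolding complete_upto_def by blast
  define v0 where "v0 = (\<lambda>a. x a - (\<Sum>j<k. cinner (w j) x * w j a))"
  have "v0 \<in> orth_compl k w" unfolding v0_def by (rule residual_in_orth_compl[OF orth])
  moreover have "v0 \<noteq> (\<lambda>a. 0)" using x unfolding v0_def by (auto simp: fun_eq_iff)
  ultimately obtain v \<mu> where v: "v \<in> orth_compl k w" "cinner v v = 1"
    and eigv: "mvmult M v = (\<lambda>a. complex_of_real \<mu> * v a)"
    using hermitian_eigenvector_in_orth_compl[OF herm eig] by blast
  have "eigenvectors_upto M (Suc k) (w(k := v)) (lam(k := \<mu>))"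
    using eig eigv unfolding eigenvectors_upto_def by (simp add: less_Suc_eq)
  then show ?thesis by (rule that[OF orthonormal_upto_Suc_upd[OF orth v]])
qed

theorem hermitian_spectral_decomposition:
  fixes M :: "('a::finite) op"
  assumes "adjoint M = M"
  obtains K w lam where "orthonormal_upto K w" "complete_upto K w" "eigenvectors_upto M K w lam"
proof (rule ccontr)
  assume none: "\<not> thesis"
  have "\<exists>w lam. orthonormal_upto k w \<and> eigenvectors_upto M k w lam" for k
  proof (induction k)
    case 0
    then show ?case by (simp add: orthonormal_upto_def eigenvectors_upto_def)
  next
    case (Suc k)
    then obtain w lam where "orthonormal_upto k w" "eigenvectors_upto M k w lam" by blast
    moreover from calculation have "\<not> complete_upto k w" using that none by blast
    ultimately obtain w' lam' where "orthonormal_upto (Suc k) w'" "eigenvectors_upto M (Suc k) w' lam'"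
      by (rule extend_eigenvectors[OF assms])
    then show ?case by blast
  qed
  then obtain w :: "nat \<Rightarrow> 'a vec" where "orthonormal_upto (Suc CARD('a)) w" by blast
  then show False using orthonormal_upto_le_card by fastforce
qed

section \<open>Positive square roots and the trace norm\<close>

lemma psd_eigenvalue_nonneg:
  assumes "psd t" "mvmult t w = (\<lambda>a. complex_of_real m * w a)" "cinner w w = 1"
  shows "0 \<le> m"
  using psd_form_nonneg[OF assms(1), of w] assms(2,3) by (simp add: cinner_scale_right)

text \<open>With \<open>y = s w - m w\<close> one gets \<open>s y = -m y\<close>, which positivity of \<open>s\<close> only allows if
  \<open>s y = 0\<close>.\<close>

lemma psd_sqrt_eigenvector:
  assumes s: "psd s" and m: "0 \<le> m"
    and ssw: "mvmult (mmult s s) w = (\<lambda>a. complex_of_real (m * m) * w a)"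
  shows "mvmult s w = (\<lambda>a. complex_of_real m * w a)"
proof (cases "m = 0")
  case True
  have "cinner (mvmult s w) (mvmult s w) = cinner w (mvmult (mmult s s) w)"
    by (simp add: mvmult_mmult hermitian_cinner_mvmult[OF psd_hermitian[OF s]])
  also have "\<dots> = 0" using ssw True by simp
  finally show ?thesis using True by (simp add: cinner_self_eq_0_iff)
next
  case False
  define y where "y = (\<lambda>a. mvmult s w a - complex_of_real m * w a)"
  have sy: "mvmult s y = (\<lambda>a. complex_of_real (- m) * y a)"
    using ssw unfolding y_def mvmult_diff mvmult_scale mvmult_mmult by (simp add: fun_eq_iff algebra_simps)
  have "Re (cinner y (mvmult s y)) = - m * Re (cinner y y)"
    unfolding sy cinner_scale_right by simp
  moreover have "0 \<le> m * Re (cinner y y)" using m Re_cinner_self_nonneg[of y] by simp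
  ultimately have "Re (cinner y (mvmult s y)) = 0" using psd_form_nonneg[OF s, of y] by linarith
  then have "mvmult s y = (\<lambda>a. 0)" by (rule psd_form_eq_0_imp_kernel[OF s])
  then have "y = (\<lambda>a. 0)" using False unfolding sy by (simp add: fun_eq_iff)
  then show ?thesis unfolding y_def by (simp add: fun_eq_iff)
qed

lemma psd_sqrt_unique:
  assumes s: "psd s" and t: "psd t" and st: "mmult s s = mmult t t"
  shows "s = t"
proof -
  obtain K w lam where orth: "orthonormal_upto K w" and compl: "complete_upto K w"
    and eig: "eigenvectors_upto t K w lam"
    using hermitian_spectral_decomposition[OF psd_hermitian[OF t]] .
  show ?thesis
  proof (rule complete_upto_op_eqI[OF compl])
    fix j assume "j < K"
    then have tw: "mvmult t (w j) = (\<lambda>a. complex_of_real (lam j) * w j a)"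
      using eig unfolding eigenvectors_upto_def by blast
    have "0 \<le> lam j"
      using psd_eigenvalue_nonneg[OF t tw] orthonormal_uptoD[OF orth \<open>j < K\<close> \<open>j < K\<close>] by simp
    moreover have "mvmult (mmult s s) (w j) = (\<lambda>a. complex_of_real (lam j * lam j) * w j a)"
      unfolding st mvmult_mmult tw mvmult_scale by (simp add: mult.assoc)
    ultimately show "mvmult s (w j) = mvmult t (w j)" unfolding tw by (rule psd_sqrt_eigenvector[OF s])
  qed
qed

lemma trace_norm_eqI:
  assumes "psd s" "mmult s s = mmult (adjoint x) x"
  shows "trace_norm x = Re (trace s)"
proof -
  have "(THE s. psd s \<and> mmult s s = mmult (adjoint x) x) = s"
  proof (rule the_equality)
    fix s' assume "psd s' \<and> mmult s' s' = mmult (adjoint x) x"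
    then show "s' = s" using psd_sqrt_unique[of s' s] assms by simp
  qed (use assms in simp)
  then show ?thesis unfolding trace_norm_def by simp
qed

definition spectral_sum :: "nat \<Rightarrow> (nat \<Rightarrow> real) \<Rightarrow> (nat \<Rightarrow> ('a::finite) vec) \<Rightarrow> 'a op" where
  "spectral_sum K c w = (\<lambda>i i'. \<Sum>j<K. complex_of_real (c j) * w j i * cnj (w j i'))"

lemma mvmult_spectral_sum:
  "mvmult (spectral_sum K c w) v = (\<lambda>i. \<Sum>j<K. complex_of_real (c j) * cinner (w j) v * w j i)"
  unfolding mvmult_def spectral_sum_def cinner_def
  by (simp add: sum_distrib_left sum_distrib_right mult.commute mult.left_commute) (rule ext, rule sum.swap)

lemma mvmult_spectral_sum_member:
  assumes "orthonormal_upto K w" "l < K"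
  shows "mvmult (spectral_sum K c w) (w l) = (\<lambda>i. complex_of_real (c l) * w l i)"
proof -
  have "(\<Sum>j<K. complex_of_real (c j) * cinner (w j) (w l) * w j i)
      = (\<Sum>j<K. if j = l then complex_of_real (c j) * w j i else 0)" for i
    using assms by (intro sum.cong) (auto simp: orthonormal_uptoD)
  then show ?thesis unfolding mvmult_spectral_sum using assms(2) by simp
qed

lemma form_spectral_sum:
  "cinner v (mvmult (spectral_sum K c w) v) = complex_of_real (\<Sum>j<K. c j * (cmod (cinner (w j) v))\<^sup>2)"
proof -
  have "cinner v (w j) * cinner (w j) v = complex_of_real ((cmod (cinner (w j) v))\<^sup>2)" for j
    by (simp add: cinner_commute[of v] cnj_mult_self)
  then show ?thesis
    unfolding mvmult_spectral_sum cinner_sum_right cinner_scale_right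
    by (simp add: mult.commute mult.left_commute)
qed

lemma psd_spectral_sum:
  assumes "\<And>j. j < K \<Longrightarrow> 0 \<le> c j"
  shows "psd (spectral_sum K c w)"
  unfolding psd_iff form_spectral_sum
  using assms by (auto simp: spectral_sum_def adjoint_def mult.commute mult.left_commute intro!: sum_nonneg)

lemma trace_spectral_sum:
  "trace (spectral_sum K c w) = (\<Sum>j<K. complex_of_real (c j) * cinner (w j) (w j))"
  unfolding trace_def spectral_sum_def cinner_def
  by (subst sum.swap) (simp add: sum_distrib_left mult.commute mult.left_commute)

text \<open>The positive square root of \<open>|b\<rangle>\<langle>a|a\<rangle>\<langle>b| = \<parallel>a\<parallel>\<^sup>2 |b\<rangle>\<langle>b|\<close> is \<open>(\<parallel>a\<parallel> / \<parallel>b\<parallel>) |b\<rangle>\<langle>b|\<close>; for \<open>b = 0\<close>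
  the junk value \<open>\<parallel>a\<parallel> / 0 = 0\<close> still gives the right root \<open>0\<close>.\<close>

lemma trace_norm_outer: "trace_norm (outer a b) = vnorm a * vnorm b"
proof -
  define c where "c = vnorm a / vnorm b"
  define s where "s = spectral_sum 1 (\<lambda>_. c) (\<lambda>_. b)"
  have "psd s" unfolding s_def c_def by (rule psd_spectral_sum) (simp add: vnorm_nonneg)
  have ccb: "complex_of_real c * complex_of_real c * cinner b b * (b i * cnj (b i'))
      = cinner a a * (b i * cnj (b i'))" for i i'
  proof (cases "b = (\<lambda>k. 0)")
    case False
    then have "c * c * (vnorm b)\<^sup>2 = (vnorm a)\<^sup>2"
      using vnorm_pos[OF False] by (simp add: c_def power2_eq_square)
    then show ?thesis by (metis cinner_self_eq_power2_vnorm of_real_mult)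
  qed simp
  have "mmult s s i i' = mmult (adjoint (outer a b)) (outer a b) i i'" for i i'
  proof -
    have "mmult s s i i' = complex_of_real c * complex_of_real c * cinner b b * (b i * cnj (b i'))"
      unfolding mmult_def s_def spectral_sum_def cinner_def
      by (simp add: sum_distrib_left sum_distrib_right mult.commute mult.left_commute)
    also have "\<dots> = mmult (adjoint (outer a b)) (outer a b) i i'"
      unfolding ccb by (simp add: mmult_def adjoint_def outer_def cinner_def
          sum_distrib_left sum_distrib_right mult.commute mult.left_commute)
    finally show ?thesis .
  qed
  then have "trace_norm (outer a b) = Re (trace s)"
    using trace_norm_eqI[OF \<open>psd s\<close>] by blast
  also have "\<dots> = vnorm a * vnorm b"
    unfolding s_def trace_spectral_sum cinner_self_eq_power2_vnorm c_def
    by (cases "vnorm b = 0") (simp_all add: power2_eq_square)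
  finally show ?thesis .
qed

text \<open>The decomposition comes from the spectral decomposition \<open>u\<^sup>\<dagger>u = \<Sum>\<^sub>j \<lambda>\<^sub>j |w\<^sub>j\<rangle>\<langle>w\<^sub>j|\<close>:
  \<open>u = \<Sum>\<^sub>j |u w\<^sub>j\<rangle>\<langle>w\<^sub>j|\<close> and \<open>\<parallel>u w\<^sub>j\<parallel> = \<surd>\<lambda>\<^sub>j\<close>.\<close>

lemma trace_norm_outer_decomposition:
  fixes u :: "('a::finite) op"
  obtains a b :: "nat \<Rightarrow> 'a vec" and K :: nat where "u = (\<lambda>i i'. \<Sum>l<K. outer (a l) (b l) i i')"
    and "trace_norm u = (\<Sum>l<K. vnorm (a l) * vnorm (b l))"
proof -
  define M where "M = mmult (adjoint u) u"
  obtain K w lam where orth: "orthonormal_upto K w" and compl: "complete_upto K w"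
    and eig: "eigenvectors_upto M K w lam"
    using hermitian_spectral_decomposition[OF hermitian_gram[of u, folded M_def]] .
  have ww: "cinner (w j) (w j) = 1" if "j < K" for j using orthonormal_uptoD[OF orth that that] by simp
  have lam: "lam j = (vnorm (mvmult u (w j)))\<^sup>2" if "j < K" for j
  proof -
    have "complex_of_real (lam j) = cinner (w j) (mvmult M (w j))"
      using eig that ww[OF that] unfolding eigenvectors_upto_def by (simp add: cinner_scale_right)
    also have "\<dots> = complex_of_real ((vnorm (mvmult u (w j)))\<^sup>2)"
      unfolding M_def mvmult_mmult mvmult_adjoint adjoint_adjoint cinner_self_eq_power2_vnorm ..
    finally show ?thesis by (simp only: of_real_eq_iff)
  qed
  define s where "s = spectral_sum K (\<lambda>j. sqrt (lam j)) w"
  have "psd s" unfolding s_def by (rule psd_spectral_sum) (simp add: lam)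
  moreover have "mmult s s = M"
  proof (rule complete_upto_op_eqI[OF compl])
    fix j assume "j < K"
    then show "mvmult (mmult s s) (w j) = mvmult M (w j)"
      using eig lam unfolding mvmult_mmult s_def mvmult_spectral_sum_member[OF orth \<open>j < K\<close>]
        mvmult_scale eigenvectors_upto_def
      by (simp add: mult.assoc vnorm_nonneg power2_eq_square)
  qed
  ultimately have "trace_norm u = Re (trace s)" unfolding M_def by (rule trace_norm_eqI)
  also have "\<dots> = (\<Sum>l<K. vnorm (mvmult u (w l)) * vnorm (w l))"
    unfolding s_def trace_spectral_sum Re_sum
    using lam ww cinner_self_eq_1_iff by (intro sum.cong) (auto simp: vnorm_nonneg)
  finally have "trace_norm u = (\<Sum>l<K. vnorm (mvmult u (w l)) * vnorm (w l))" .
  moreover have "u = (\<lambda>i i'. \<Sum>l<K. outer (mvmult u (w l)) (w l) i i')"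
    using complete_upto_expansion[OF compl, of u] by (simp add: outer_def fun_eq_iff)
  ultimately show ?thesis by (intro that[where a = "\<lambda>l. mvmult u (w l)" and b = w])
qed

section \<open>Functionals bounded on elementary tensors\<close>

lemma sum_UNIV_prod: "(\<Sum>z\<in>UNIV. f z) = (\<Sum>x\<in>UNIV. \<Sum>y\<in>UNIV. f (x, y))"
  by (simp add: sum.cartesian_product)

lemma cinner_tensor_vec: "cinner (tensor_vec a c) (tensor_vec b d) = cinner a b * cinner c d"
  unfolding cinner_def tensor_vec_def sum_UNIV_prod
  by (simp add: sum_product mult.commute mult.left_commute)

lemma tensor_op_outer: "tensor_op (outer a b) (outer c d) = outer (tensor_vec a c) (tensor_vec b d)"
  by (auto simp: fun_eq_iff tensor_op_def outer_def tensor_vec_def)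

lemma form_outer: "cinner W (mvmult (outer x y) W) = cinner W x * cinner y W"
  unfolding mvmult_outer cinner_scale_right by (rule mult.commute)

text \<open>Expand \<open>u\<close> and \<open>v\<close> into rank-one operators; \<open>\<langle>W, (|a\<rangle>\<langle>b| \<otimes> |c\<rangle>\<langle>d|) W\<rangle>\<close> factors as
  \<open>\<langle>W, a \<otimes> c\<rangle> \<langle>b \<otimes> d, W\<rangle>\<close>.\<close>

lemma form_tensor_op_le_trace_norms:
  assumes bound: "\<And>x y. cmod (cinner W (tensor_vec x y)) \<le> vnorm x * vnorm y"
  shows "cmod (cinner W (mvmult (tensor_op u v) W)) \<le> trace_norm u * trace_norm v"
proof -
  obtain a b and K :: nat where u: "u = (\<lambda>i i'. \<Sum>l<K. outer (a l) (b l) i i')"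
    and tu: "trace_norm u = (\<Sum>l<K. vnorm (a l) * vnorm (b l))"
    by (rule trace_norm_outer_decomposition)
  obtain c d and K' :: nat where v: "v = (\<lambda>i i'. \<Sum>m<K'. outer (c m) (d m) i i')"
    and tv: "trace_norm v = (\<Sum>m<K'. vnorm (c m) * vnorm (d m))"
    by (rule trace_norm_outer_decomposition)
  have bound': "cmod (cinner (tensor_vec x y) W) \<le> vnorm x * vnorm y" for x y
    using bound[of x y] cinner_commute[of "tensor_vec x y" W] by simp
  have "tensor_op u v
      = (\<lambda>z z'. \<Sum>l<K. \<Sum>m<K'. outer (tensor_vec (a l) (c m)) (tensor_vec (b l) (d m)) z z')"
    by (auto simp: fun_eq_iff u v tensor_op_def outer_def tensor_vec_def sum_product
        mult.commute mult.left_commute)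
  then have "cinner W (mvmult (tensor_op u v) W)
      = (\<Sum>l<K. \<Sum>m<K'. cinner W (tensor_vec (a l) (c m)) * cinner (tensor_vec (b l) (d m)) W)"
    by (simp add: mvmult_sum_op cinner_sum_right form_outer)
  also have "cmod \<dots>
      \<le> (\<Sum>l<K. \<Sum>m<K'. cmod (cinner W (tensor_vec (a l) (c m)) * cinner (tensor_vec (b l) (d m)) W))"
    by (rule order_trans[OF norm_sum], rule sum_mono, rule norm_sum)
  also have "\<dots> \<le> (\<Sum>l<K. \<Sum>m<K'. (vnorm (a l) * vnorm (c m)) * (vnorm (b l) * vnorm (d m)))"
    unfolding norm_mult by (intro sum_mono mult_mono bound bound' mult_nonneg_nonneg vnorm_nonneg norm_ge_zero)
  also have "\<dots> = trace_norm u * trace_norm v"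
    unfolding tu tv by (simp add: sum_product mult.commute mult.left_commute)
  finally show ?thesis .
qed

lemma form_le_decomposition:
  assumes bound: "\<And>x y. cmod (cinner W (tensor_vec x y)) \<le> vnorm x * vnorm y"
    and t: "t = (\<lambda>x y. \<Sum>i<n. tensor_op (u i) (v i) x y)"
  shows "cmod (cinner W (mvmult t W)) \<le> (\<Sum>i<n. trace_norm (u i) * trace_norm (v i))"
proof -
  have "cmod (cinner W (mvmult t W)) \<le> (\<Sum>i<n. cmod (cinner W (mvmult (tensor_op (u i) (v i)) W)))"
    unfolding t mvmult_sum_op cinner_sum_right by (rule norm_sum)
  also have "\<dots> \<le> (\<Sum>i<n. trace_norm (u i) * trace_norm (v i))"
    by (intro sum_mono form_tensor_op_le_trace_norms bound)
  finally show ?thesis .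
qed

section \<open>The maximally entangled vector\<close>

definition max_entangled :: "('i::finite \<Rightarrow> ('a::finite) vec) \<Rightarrow> ('i \<Rightarrow> ('b::finite) vec) \<Rightarrow> ('a \<times> 'b) vec" where
  "max_entangled phi chi = (\<lambda>z. \<Sum>i\<in>UNIV. tensor_vec (phi i) (chi i) z)"

lemma orthonormal_basisD: "orthonormal_basis e \<Longrightarrow> cinner (e i) (e j) = (if i = j then 1 else 0)"
  unfolding orthonormal_basis_def by simp

lemma orthonormal_basis_vnorm: "orthonormal_basis e \<Longrightarrow> vnorm (e i) = 1"
  unfolding orthonormal_basis_def vnorm_def by simp

lemma parseval_identity:
  fixes e :: "'i::finite \<Rightarrow> ('a::finite) vec"
  assumes onb: "orthonormal_basis e"
  shows "(\<Sum>i\<in>UNIV. (cmod (cinner (e i) x))\<^sup>2) = Re (cinner x x)"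
proof -
  obtain c F where "finite F" and x: "x = (\<lambda>k. \<Sum>i\<in>F. c i * e i k)"
    using onb unfolding orthonormal_basis_def by blast
  define c' where "c' i = (if i \<in> F then c i else 0)" for i
  have x': "x = (\<lambda>k. \<Sum>i\<in>UNIV. c' i * e i k)"
  proof (rule ext)
    fix k
    have "(\<Sum>i\<in>UNIV. c' i * e i k) = (\<Sum>i\<in>UNIV. if i \<in> F then c i * e i k else 0)"
      unfolding c'_def by (intro sum.cong) auto
    also have "\<dots> = (\<Sum>i\<in>F. c i * e i k)" by (simp add: sum.If_cases)
    finally show "x k = (\<Sum>i\<in>UNIV. c' i * e i k)" unfolding x by simp
  qed
  have coef: "cinner (e j) x = c' j" for j
  proof -
    have "cinner (e j) x = (\<Sum>i\<in>UNIV. c' i * cinner (e j) (e i))"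
      by (subst x') (simp add: cinner_sum_right cinner_scale_right)
    also have "\<dots> = c' j" by (simp add: orthonormal_basisD[OF onb] if_distrib cong: if_cong)
    finally show ?thesis .
  qed
  have "cinner x x = (\<Sum>i\<in>UNIV. cnj (c' i) * cinner (e i) x)"
    by (subst (1) x') (simp add: cinner_sum_left cinner_scale_left)
  also have "\<dots> = (\<Sum>i\<in>UNIV. complex_of_real ((cmod (c' i))\<^sup>2))" by (simp add: coef cnj_mult_self)
  finally show ?thesis by (simp add: coef)
qed

text \<open>\<open>\<langle>\<Omega>, a \<otimes> c\<rangle> = \<Sum>\<^sub>i \<langle>\<phi>\<^sub>i, a\<rangle> \<langle>\<chi>\<^sub>i, c\<rangle>\<close>; apply Cauchy-Schwarz to the coefficient sequences and
  Parseval to each factor.\<close>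

lemma cmod_cinner_max_entangled_tensor_vec_le:
  fixes phi :: "'i::finite \<Rightarrow> ('a::finite) vec" and chi :: "'i \<Rightarrow> ('b::finite) vec"
  assumes "orthonormal_basis phi" "orthonormal_basis chi"
  shows "cmod (cinner (max_entangled phi chi) (tensor_vec a c)) \<le> vnorm a * vnorm c"
proof -
  have "cmod (cinner (max_entangled phi chi) (tensor_vec a c))
      = cmod (\<Sum>i\<in>UNIV. cinner (phi i) a * cinner (chi i) c)"
    by (simp add: max_entangled_def cinner_sum_left cinner_tensor_vec)
  also have "\<dots> \<le> (\<Sum>i\<in>UNIV. \<bar>cmod (cinner (phi i) a)\<bar> * \<bar>cmod (cinner (chi i) c)\<bar>)"
    by (rule order_trans[OF norm_sum]) (simp add: norm_mult)
  also have "\<dots> \<le> L2_set (\<lambda>i. cmod (cinner (phi i) a)) UNIV * L2_set (\<lambda>i. cmod (cinner (chi i) c)) UNIV"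
    by (rule L2_set_mult_ineq)
  also have "\<dots> = vnorm a * vnorm c"
    unfolding L2_set_def vnorm_def parseval_identity[OF assms(1)] parseval_identity[OF assms(2)] ..
  finally show ?thesis .
qed

lemma cinner_max_entangled_schmidt_vec:
  fixes phi :: "'i::finite \<Rightarrow> ('a::finite) vec" and chi :: "'i \<Rightarrow> ('b::finite) vec"
  assumes "orthonormal_basis phi" "orthonormal_basis chi"
  shows "cinner (max_entangled phi chi) (\<lambda>z. \<Sum>i\<in>UNIV. c i * tensor_vec (phi i) (chi i) z) = (\<Sum>i\<in>UNIV. c i)"
  unfolding max_entangled_def cinner_sum_left cinner_sum_right cinner_scale_right cinner_tensor_vec
  by (simp add: orthonormal_basisD[OF assms(1)] orthonormal_basisD[OF assms(2)] if_distrib cong: if_cong)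

lemma gamma_norm_eqI:
  fixes U :: "'k::finite \<Rightarrow> ('a::finite) op" and V :: "'k \<Rightarrow> ('b::finite) op"
  assumes decomposition: "t = (\<lambda>x y. \<Sum>k\<in>UNIV. tensor_op (U k) (V k) x y)"
    and minimal: "\<And>(n::nat) u v. t = (\<lambda>x y. \<Sum>i<n. tensor_op (u i) (v i) x y) \<Longrightarrow>
        (\<Sum>k\<in>UNIV. trace_norm (U k) * trace_norm (V k)) \<le> (\<Sum>i<n. trace_norm (u i) * trace_norm (v i))"
  shows "gamma_norm t = (\<Sum>k\<in>UNIV. trace_norm (U k) * trace_norm (V k))"
proof -
  define R where "R = {r. \<exists>(n::nat) (u::nat \<Rightarrow> 'a op) (v::nat \<Rightarrow> 'b op).
       t = (\<lambda>x y. \<Sum>i<n. tensor_op (u i) (v i) x y) \<and> r = (\<Sum>i<n. trace_norm (u i) * trace_norm (v i))}"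
  obtain g where g: "bij_betw g {..<CARD('k)} (UNIV :: 'k set)"
    using ex_bij_betw_nat_finite[of "UNIV :: 'k set"] by (auto simp: lessThan_atLeast0)
  have "(\<Sum>k\<in>UNIV. trace_norm (U k) * trace_norm (V k)) \<in> R"
    unfolding R_def mem_Collect_eq
  proof (intro exI conjI)
    have "(\<Sum>i<CARD('k). tensor_op (U (g i)) (V (g i)) x y) = (\<Sum>k\<in>UNIV. tensor_op (U k) (V k) x y)"
      for x y by (rule sum.reindex_bij_betw[OF g])
    then show "t = (\<lambda>x y. \<Sum>i<CARD('k). tensor_op (U (g i)) (V (g i)) x y)"
      by (simp add: decomposition)
    show "(\<Sum>k\<in>UNIV. trace_norm (U k) * trace_norm (V k))
        = (\<Sum>i<CARD('k). trace_norm (U (g i)) * trace_norm (V (g i)))"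
      by (rule sum.reindex_bij_betw[OF g, symmetric])
  qed
  moreover have lower: "(\<Sum>k\<in>UNIV. trace_norm (U k) * trace_norm (V k)) \<le> r" if r: "r \<in> R" for r
  proof -
    obtain n :: nat and u v where t: "t = (\<lambda>x y. \<Sum>i<n. tensor_op (u i) (v i) x y)"
      and "r = (\<Sum>i<n. trace_norm (u i) * trace_norm (v i))"
      using r unfolding R_def by blast
    then show ?thesis using minimal[OF t] by simp
  qed
  ultimately have "Inf R = (\<Sum>k\<in>UNIV. trace_norm (U k) * trace_norm (V k))"
    by (intro antisym cInf_lower cInf_greatest bdd_belowI[of R]) auto
  then show ?thesis unfolding gamma_norm_def R_def .
qed

lemma proj_sum_tensor_vec:
  "proj (\<lambda>z. \<Sum>i\<in>UNIV. tensor_vec (a i) (b i) z)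
     = (\<lambda>x y. \<Sum>k\<in>UNIV. tensor_op (outer (a (fst k)) (a (snd k))) (outer (b (fst k)) (b (snd k))) x y)"
  unfolding tensor_op_outer sum_UNIV_prod
  by (simp add: fun_eq_iff proj_def outer_def sum_product cnj_sum)

theorem proposition4:
  fixes phi :: "'i::finite \<Rightarrow> ('a::finite) vec"
    and chi :: "'i \<Rightarrow> ('b::finite) vec"
    and p :: "'i \<Rightarrow> real"
    and psi :: "('a \<times> 'b) vec"
  assumes "orthonormal_basis phi" and "orthonormal_basis chi"
    and "\<And>i. p i \<ge> 0" and "(\<Sum>i\<in>UNIV. p i) = 1"
    and "psi = (\<lambda>z. \<Sum>i\<in>UNIV. complex_of_real (sqrt (p i)) * tensor_vec (phi i) (chi i) z)"
    and "cinner psi psi = 1"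
  shows "gamma_norm (proj psi) = (\<Sum>i\<in>UNIV. \<Sum>j\<in>UNIV. sqrt (p i * p j))
     \<and> (\<Sum>i\<in>UNIV. \<Sum>j\<in>UNIV. sqrt (p i * p j)) = (\<Sum>i\<in>UNIV. sqrt (p i))^2"
proof -
  note onb = assms(1,2) and psi = assms(5)
  define a where "a i = (\<lambda>k. complex_of_real (sqrt (p i)) * phi i k)" for i
  define U where "U k = outer (a (fst k)) (a (snd k))" for k
  define V where "V k = outer (chi (fst k)) (chi (snd k))" for k
  have square: "(\<Sum>i\<in>UNIV. \<Sum>j\<in>UNIV. sqrt (p i * p j)) = (\<Sum>i\<in>UNIV. sqrt (p i))\<^sup>2"
    by (simp add: power2_eq_square sum_product real_sqrt_mult)
  have "psi = (\<lambda>z. \<Sum>i\<in>UNIV. tensor_vec (a i) (chi i) z)"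
    unfolding psi a_def by (simp add: tensor_vec_def fun_eq_iff mult.assoc split: prod.split)
  then have decomposition: "proj psi = (\<lambda>x y. \<Sum>k\<in>UNIV. tensor_op (U k) (V k) x y)"
    unfolding U_def V_def by (simp add: proj_sum_tensor_vec)
  have cost: "(\<Sum>k\<in>UNIV. trace_norm (U k) * trace_norm (V k)) = (\<Sum>i\<in>UNIV. \<Sum>j\<in>UNIV. sqrt (p i * p j))"
    using assms(3) unfolding sum_UNIV_prod U_def V_def a_def trace_norm_outer vnorm_scale
      orthonormal_basis_vnorm[OF onb(1)] orthonormal_basis_vnorm[OF onb(2)]
    by (simp add: real_sqrt_mult)
  have "cinner (max_entangled phi chi) psi = complex_of_real (\<Sum>i\<in>UNIV. sqrt (p i))"
    unfolding psi cinner_max_entangled_schmidt_vec[OF onb] by simp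
  moreover have "0 \<le> (\<Sum>i\<in>UNIV. sqrt (p i))" using assms(3) by (simp add: sum_nonneg)
  ultimately have functional: "cmod (cinner (max_entangled phi chi) (mvmult (proj psi) (max_entangled phi chi)))
      = (\<Sum>k\<in>UNIV. trace_norm (U k) * trace_norm (V k))"
    unfolding proj_def[folded outer_def] form_outer cost square cinner_commute[of psi]
    by (simp add: norm_mult power2_eq_square del: of_real_sum)
  have "gamma_norm (proj psi) = (\<Sum>k\<in>UNIV. trace_norm (U k) * trace_norm (V k))"
    using form_le_decomposition[OF cmod_cinner_max_entangled_tensor_vec_le[OF onb], where t = "proj psi"]
    unfolding functional by (rule gamma_norm_eqI[OF decomposition])
  then show ?thesis unfolding cost using square by simp
qed

end
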